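(* For all integers $\ell\ge0$, $$P(\ell,0,\dots,0)=(1-r)\left[\frac{1+r-\sqrt{(1+r)^2-4r_1}}{2}\right]^{\ell},$$ independently of $K$ and of how $r-r_1$ is split among levels $2,\dots,K$.
   Context: Fix integers $c\ge 1$, $K\ge 2$ and reals $r_1,\dots,r_K>0$ with $r=\sum_{k=1}^K r_k<1$ (here $r_k=\lambda_k/(c\mu)$ for an M/M/$c$ queue with $K$ non-preemptive priority levels, level 1 the highest). Write $\mathbf e_\kappa$ for the standard unit vectors of $\mathbb Z^K$, $\delta_{ij}$ for the Kronecker delta. Consider the equations for $(p_{\mathbf n})_{\mathbf n\in\mathbb N_0^K}$, with the convention $p_{\mathbf n}=0$ if some component of $\mathbf n$ is negative: $$(1+r)p_{\mathbf n}=\Big(\prod_{j=1}^K\delta_{0n_j}\Big)p_{\mathbf n}+\sum_{\kappa=1}^K\Big[r_\kappa p_{\mathbf n-\mathbf e_\kappa}+\Big(\prod_{j=1}^{\kappa-1}\delta_{0n_j}\Big)p_{\mathbf n+\mathbf e_\kappa}\Big],\quad \mathbf n\in\mathbb N_0^K .$$ These are the stationary balance equations for the states in which all $c$ servers are busy and $n_\kappa$ clients of level $\kappa$ wait in the queue; their nonnegative summable solutions form a one-dimensional cone, and $P$ denotes the unique solution with $\sum_{\mathbf n}P(\mathbf n)=1$. *)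

theory Defs
  imports "HOL-Analysis.Analysis"
begin

text \<open>States: vectors n in N_0^K, represented as functions nat => nat whose
  components are indexed by 1..K and vanish outside {1..K}.\<close>
definition states :: "nat \<Rightarrow> (nat \<Rightarrow> nat) set" where
  "states K = {n. \<forall>j. j \<notin> {1..K} \<longrightarrow> n j = 0}"

definition p_minus :: "((nat \<Rightarrow> nat) \<Rightarrow> real) \<Rightarrow> (nat \<Rightarrow> nat) \<Rightarrow> nat \<Rightarrow> real" where
  "p_minus p n \<kappa> = (if n \<kappa> \<ge> 1 then p (n(\<kappa> := n \<kappa> - 1)) else 0)"

definition p_plus :: "((nat \<Rightarrow> nat) \<Rightarrow> real) \<Rightarrow> (nat \<Rightarrow> nat) \<Rightarrow> nat \<Rightarrow> real" where
  "p_plus p n \<kappa> = p (n(\<kappa> := n \<kappa> + 1))"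

definition kdelta0 :: "nat \<Rightarrow> real" where
  "kdelta0 m = (if m = 0 then 1 else 0)"

definition balance_eqs :: "nat \<Rightarrow> (nat \<Rightarrow> real) \<Rightarrow> ((nat \<Rightarrow> nat) \<Rightarrow> real) \<Rightarrow> bool" where
  "balance_eqs K rr p \<longleftrightarrow>
     (\<forall>n \<in> states K.
        (1 + (\<Sum>k=1..K. rr k)) * p n =
          (\<Prod>j=1..K. kdelta0 (n j)) * p n
          + (\<Sum>\<kappa>=1..K. rr \<kappa> * p_minus p n \<kappa>
                        + (\<Prod>j=1..<\<kappa>. kdelta0 (n j)) * p_plus p n \<kappa>))"

end

theory Submission
  imports Defs
begin

text \<open>Group the states by the total number m of waiting clients. Summed over one such finite
  level, the balance equations collapse to a relation between consecutive level masses, because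
  every state of level m + 1 arises in exactly one way as n + e_k with n_1 = ... = n_(k-1) = 0,
  namely with k its first nonzero index. Hence level m carries mass r^m P(0), and the
  normalisation gives P(0) = 1 - r. For a(l) = P(l,0,...,0) the balance equations reduce to
  a(l+2) = (1+r) a(l+1) - r_1 a(l), whose characteristic roots x <= y satisfy x y = r_1 and,
  since r_1 < r (this is where K >= 2 is used), y > 1. A bounded solution has no y-mode,
  so a(l) = x^l a(0).\<close>

lemma sum_fun_upd_add:
  fixes f :: "'a \<Rightarrow> 'b::comm_monoid_add"
  assumes "finite A" "x \<in> A"
  shows "sum (f(x := v)) A + f x = sum f A + v"
  using sum.remove[OF assms, of "f(x := v)"] sum.remove[OF assms, of f]
  by (simp add: sum.cong[of "A - {x}" _ "f(x := v)" f] add_ac)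

lemma prod_kdelta0:
  "finite A \<Longrightarrow> (\<Prod>j\<in>A. kdelta0 (n j)) = (if \<forall>j\<in>A. n j = 0 then 1 else 0)"
  by (induction A rule: finite_induct) (auto simp: kdelta0_def)

lemma has_sum_disjoint_finite_UN:
  fixes f :: "'a \<Rightarrow> 'b::{topological_comm_monoid_add,t3_space}"
  assumes "(f has_sum s) (\<Union>i\<in>I. B i)" and "disjoint_family_on B I"
    and "\<And>i. i \<in> I \<Longrightarrow> finite (B i)"
  shows "((\<lambda>i. sum f (B i)) has_sum s) I"
proof -
  have "inj_on snd (Sigma I B)"
    using assms(2) by (force simp: inj_on_def disjoint_family_on_def)
  moreover have "snd ` Sigma I B = (\<Union>i\<in>I. B i)"
    by force
  ultimately have "((f \<circ> snd) has_sum s) (Sigma I B)"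
    using assms(1) has_sum_reindex by metis
  then show ?thesis
    by (rule has_sum_SigmaD) (simp add: assms(3))
qed

lemma bounded_recurrence_stable_root:
  fixes a :: "nat \<Rightarrow> 'a::real_normed_field"
  assumes rec: "\<And>l. a (Suc (Suc l)) = (x + y) * a (Suc l) - x * y * a l"
    and bounded: "Bseq a" and y: "1 < norm y"
  shows "a l = x ^ l * a 0"
proof -
  define d where "d l = a (Suc l) - x * a l" for l
  have "d (Suc l) = y * d l" for l
    unfolding d_def rec by (simp add: algebra_simps)
  then have d_pow: "d l = y ^ l * d 0" for l
    by (induction l) (simp_all add: mult.assoc)
  obtain B where B: "\<And>l. norm (a l) \<le> B"
    using bounded by (metis BseqE)
  have d_bound: "norm (d l) \<le> B + norm x * B" for l
  proof -
    have "norm (d l) \<le> norm (a (Suc l)) + norm x * norm (a l)"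
      unfolding d_def by (metis norm_triangle_ineq4 norm_mult)
    also have "\<dots> \<le> B + norm x * B"
      using B by (intro add_mono mult_left_mono) auto
    finally show ?thesis .
  qed
  have "d 0 = 0"
  proof (rule ccontr)
    assume "d 0 \<noteq> 0"
    then obtain l where "(B + norm x * B) / norm (d 0) < norm y ^ l"
      using real_arch_pow[OF y] by blast
    then have "B + norm x * B < norm y ^ l * norm (d 0)"
      using \<open>d 0 \<noteq> 0\<close> by (simp add: pos_divide_less_eq)
    also have "\<dots> = norm (d l)"
      by (simp add: d_pow[of l] norm_mult norm_power)
    finally show False using d_bound[of l] by simp
  qed
  then have "a (Suc l) = x * a l" for l
    using d_pow[of l] by (simp add: d_def)
  then show ?thesis
    by (induction l) simp_all
qed

lemma quadratic_roots_sum_prod: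
  fixes \<rho> \<sigma> :: real
  assumes "\<rho> < \<sigma>"
  defines "x \<equiv> (1 + \<sigma> - sqrt ((1 + \<sigma>)^2 - 4 * \<rho>)) / 2"
    and "y \<equiv> (1 + \<sigma> + sqrt ((1 + \<sigma>)^2 - 4 * \<rho>)) / 2"
  shows "x + y = 1 + \<sigma>" and "x * y = \<rho>" and "1 < y"
proof -
  have disc: "(1 + \<sigma>)^2 - 4 * \<rho> = (1 - \<sigma>)^2 + 4 * (\<sigma> - \<rho>)"
    by (simp add: power2_eq_square algebra_simps)
  have nonneg: "0 \<le> (1 + \<sigma>)^2 - 4 * \<rho>"
    unfolding disc using assms(1) by (intro add_nonneg_nonneg) simp_all
  show "x + y = 1 + \<sigma>"
    by (simp add: x_def y_def field_simps)
  have "(sqrt ((1 + \<sigma>)^2 - 4 * \<rho>))^2 = (1 + \<sigma>)^2 - 4 * \<rho>"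
    using nonneg by simp
  then show "x * y = \<rho>"
    by (simp add: x_def y_def power2_eq_square algebra_simps)
  have "sqrt ((1 - \<sigma>)^2) < sqrt ((1 + \<sigma>)^2 - 4 * \<rho>)"
    unfolding disc using assms(1) by (intro real_sqrt_less_mono) simp
  then have "\<bar>1 - \<sigma>\<bar> < sqrt ((1 + \<sigma>)^2 - 4 * \<rho>)"
    by simp
  then show "1 < y"
    by (simp add: y_def)
qed

definition level :: "nat \<Rightarrow> nat \<Rightarrow> (nat \<Rightarrow> nat) set" where
  "level K m = {n \<in> states K. (\<Sum>j=1..K. n j) = m}"

lemma finite_level: "finite (level K m)"
proof (rule finite_subset)
  show "level K m \<subseteq>
      {n. \<forall>j. (j \<in> {1..K} \<longrightarrow> n j \<in> {0..m}) \<and> (j \<notin> {1..K} \<longrightarrow> n j = 0)}"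
    using member_le_sum[of _ "{1..K}"] by (fastforce simp: level_def states_def)
qed (intro finite_set_of_finite_funs; simp)

lemma level_0: "level K 0 = {\<lambda>_. 0}"
  by (auto simp: level_def states_def fun_eq_iff) (metis atLeastAtMost_iff)

lemma states_eq_UN_level: "states K = (\<Union>m. level K m)"
  by (auto simp: level_def)

lemma disjoint_family_level: "disjoint_family (level K)"
  by (auto simp: disjoint_family_on_def level_def)

lemma level_Suc_nonzero: "n \<in> level K (Suc m) \<Longrightarrow> n \<noteq> (\<lambda>_. 0)"
  by (auto simp: level_def)

lemma sum_level_increment:
  assumes \<kappa>: "\<kappa> \<in> {1..K}"
  shows "(\<Sum>n\<in>level K m. g (n(\<kappa> := Suc (n \<kappa>)))) = (\<Sum>n\<in>{n \<in> level K (Suc m). 0 < n \<kappa>}. g n)"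
proof (rule sum.reindex_bij_witness[where j = "\<lambda>n. n(\<kappa> := Suc (n \<kappa>))"
                                   and i = "\<lambda>n. n(\<kappa> := n \<kappa> - 1)"])
  fix n assume "n \<in> level K m"
  then show "n(\<kappa> := Suc (n \<kappa>)) \<in> {n \<in> level K (Suc m). 0 < n \<kappa>}"
    using sum_fun_upd_add[of "{1..K}" \<kappa> n "Suc (n \<kappa>)"] \<kappa> by (auto simp: level_def states_def)
next
  fix n assume "n \<in> {n \<in> level K (Suc m). 0 < n \<kappa>}"
  then show "n(\<kappa> := n \<kappa> - 1) \<in> level K m"
    using sum_fun_upd_add[of "{1..K}" \<kappa> n "n \<kappa> - 1"] \<kappa> by (auto simp: level_def states_def)
qed auto

lemma first_nonzero_index:
  assumes "n \<in> states K" "n \<noteq> (\<lambda>_. 0)"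
  shows "{\<kappa> \<in> {1..K}. 0 < n \<kappa> \<and> (\<forall>j\<in>{1..<\<kappa>}. n j = 0)}
    = {LEAST \<kappa>. 0 < n \<kappa>}"
proof -
  define k where "k = (LEAST \<kappa>. 0 < n \<kappa>)"
  obtain i where "0 < n i" using assms(2) by (auto simp: fun_eq_iff)
  then have pos: "0 < n k" and below: "\<And>j. j < k \<Longrightarrow> n j = 0"
    unfolding k_def by (fast intro: LeastI, metis neq0_conv not_less_Least)
  have k: "k \<in> {1..K}"
  proof (rule ccontr)
    assume "k \<notin> {1..K}"
    then have "n k = 0" using assms(1) by (simp add: states_def)
    then show False using pos by simp
  qed
  have unique: "\<kappa> = k" if "0 < n \<kappa>" "\<forall>j\<in>{1..<\<kappa>}. n j = 0" for \<kappa>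
  proof -
    have "k \<le> \<kappa>" unfolding k_def using that(1) by (rule Least_le)
    moreover have "\<not> k < \<kappa>"
    proof
      assume "k < \<kappa>"
      then have "k \<in> {1..<\<kappa>}" using k by simp
      then show False using that(2) pos by simp
    qed
    ultimately show ?thesis by simp
  qed
  show ?thesis
    unfolding k_def[symmetric]
  proof (intro equalityI subsetI)
    fix \<kappa> assume "\<kappa> \<in> {\<kappa> \<in> {1..K}. 0 < n \<kappa> \<and> (\<forall>j\<in>{1..<\<kappa>}. n j = 0)}"
    then show "\<kappa> \<in> {k}" using unique by blast
  qed (use k pos below in auto)
qed

lemma sum_level_p_minus:
  assumes "\<kappa> \<in> {1..K}"
  shows "(\<Sum>n\<in>level K (Suc m). p_minus P n \<kappa>) = sum P (level K m)"
proof -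
  have "(\<Sum>n\<in>level K (Suc m). p_minus P n \<kappa>)
      = (\<Sum>n\<in>{n \<in> level K (Suc m). 0 < n \<kappa>}. P (n(\<kappa> := n \<kappa> - 1)))"
    unfolding sum.inter_filter[OF finite_level] by (rule sum.cong) (auto simp: p_minus_def)
  also have "\<dots> = sum P (level K m)"
    using sum_level_increment[OF assms, of "\<lambda>n. P (n(\<kappa> := n \<kappa> - 1))"] by simp
  finally show ?thesis .
qed

lemma sum_level_p_plus:
  "(\<Sum>n\<in>level K m. \<Sum>\<kappa>=1..K. (\<Prod>j=1..<\<kappa>. kdelta0 (n j)) * p_plus P n \<kappa>)
    = sum P (level K (Suc m))"
proof -
  define first where "first \<kappa> n \<longleftrightarrow> 0 < n \<kappa> \<and> (\<forall>j\<in>{1..<\<kappa>}. n j = 0)"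
    for \<kappa> and n :: "nat \<Rightarrow> nat"
  define g where "g \<kappa> n = (if \<forall>j\<in>{1..<\<kappa>}. n j = 0 then P n else 0)" for \<kappa> n
  have "(\<Prod>j=1..<\<kappa>. kdelta0 (n j)) * p_plus P n \<kappa> = g \<kappa> (n(\<kappa> := Suc (n \<kappa>)))" for n \<kappa>
    by (simp add: g_def prod_kdelta0 p_plus_def)
  then have "(\<Sum>n\<in>level K m. \<Sum>\<kappa>=1..K. (\<Prod>j=1..<\<kappa>. kdelta0 (n j)) * p_plus P n \<kappa>)
      = (\<Sum>\<kappa>=1..K. \<Sum>n\<in>level K m. g \<kappa> (n(\<kappa> := Suc (n \<kappa>))))"
    by (simp add: sum.swap[of _ "level K m"])
  also have "\<dots> = (\<Sum>\<kappa>=1..K. \<Sum>n\<in>level K (Suc m). if first \<kappa> n then P n else 0)"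
  proof (rule sum.cong[OF refl])
    fix \<kappa> :: nat assume "\<kappa> \<in> {1..K}"
    then have "(\<Sum>n\<in>level K m. g \<kappa> (n(\<kappa> := Suc (n \<kappa>))))
        = (\<Sum>n\<in>{n \<in> level K (Suc m). 0 < n \<kappa>}. g \<kappa> n)"
      by (rule sum_level_increment)
    also have "\<dots> = (\<Sum>n\<in>level K (Suc m). if first \<kappa> n then P n else 0)"
      by (simp add: sum.inter_filter[OF finite_level] first_def g_def if_if_eq_conj)
    finally show "(\<Sum>n\<in>level K m. g \<kappa> (n(\<kappa> := Suc (n \<kappa>)))) = \<dots>" .
  qed
  also have "\<dots> = (\<Sum>n\<in>level K (Suc m). \<Sum>\<kappa>\<in>{\<kappa> \<in> {1..K}. first \<kappa> n}. P n)"
    by (subst sum.swap) (simp only: sum.inter_filter finite_atLeastAtMost)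
  also have "\<dots> = sum P (level K (Suc m))"
  proof (rule sum.cong[OF refl])
    fix n assume "n \<in> level K (Suc m)"
    then have "{\<kappa> \<in> {1..K}. first \<kappa> n} = {LEAST \<kappa>. 0 < n \<kappa>}"
      unfolding first_def by (intro first_nonzero_index level_Suc_nonzero) (simp_all add: level_def)
    then show "(\<Sum>\<kappa>\<in>{\<kappa> \<in> {1..K}. first \<kappa> n}. P n) = P n" by simp
  qed
  finally show ?thesis .
qed

lemma level_balance:
  assumes "balance_eqs K rr P"
  shows "(1 + (\<Sum>k=1..K. rr k)) * sum P (level K m) =
      (\<Sum>n\<in>level K m. (\<Prod>j=1..K. kdelta0 (n j)) * P n)
    + (\<Sum>\<kappa>=1..K. rr \<kappa> * (\<Sum>n\<in>level K m. p_minus P n \<kappa>))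
    + sum P (level K (Suc m))"
proof -
  have "(1 + (\<Sum>k=1..K. rr k)) * sum P (level K m) =
      (\<Sum>n\<in>level K m. (\<Prod>j=1..K. kdelta0 (n j)) * P n
        + (\<Sum>\<kappa>=1..K. rr \<kappa> * p_minus P n \<kappa>)
        + (\<Sum>\<kappa>=1..K. (\<Prod>j=1..<\<kappa>. kdelta0 (n j)) * p_plus P n \<kappa>))"
    unfolding sum_distrib_left
    using assms by (intro sum.cong refl) (simp add: balance_eqs_def level_def sum.distrib add.assoc)
  also have "\<dots> = (\<Sum>n\<in>level K m. (\<Prod>j=1..K. kdelta0 (n j)) * P n)
      + (\<Sum>\<kappa>=1..K. rr \<kappa> * (\<Sum>n\<in>level K m. p_minus P n \<kappa>))
      + sum P (level K (Suc m))"
    unfolding sum_level_p_plus[symmetric]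
    by (simp add: sum.distrib sum_distrib_left sum.swap[of _ "level K m"])
  finally show ?thesis .
qed

lemma sum_level_Suc:
  assumes bal: "balance_eqs K rr P"
  shows "sum P (level K (Suc m)) = (\<Sum>k=1..K. rr k) * sum P (level K m)"
proof (induction m)
  case 0
  have "p_minus P (\<lambda>_. 0) \<kappa> = 0" for \<kappa> by (simp add: p_minus_def)
  then show ?case
    using level_balance[OF bal, of 0] by (simp add: level_0 kdelta0_def algebra_simps)
next
  case (Suc m)
  have "(\<Prod>j=1..K. kdelta0 (n j)) = 0" if "n \<in> level K (Suc m)" for n
    using that sum_eq_0_iff[of "{1..K}" n] by (auto simp: prod_kdelta0 level_def)
  then have "(\<Sum>n\<in>level K (Suc m). (\<Prod>j=1..K. kdelta0 (n j)) * P n) = 0"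
    by (intro sum.neutral) simp
  moreover have "(\<Sum>\<kappa>=1..K. rr \<kappa> * (\<Sum>n\<in>level K (Suc m). p_minus P n \<kappa>))
      = (\<Sum>k=1..K. rr k) * sum P (level K m)"
    by (simp add: sum_level_p_minus sum_distrib_right)
  ultimately show ?case
    using level_balance[OF bal, of "Suc m"] Suc.IH by (simp add: algebra_simps)
qed

lemma sum_level:
  assumes "balance_eqs K rr P"
  shows "sum P (level K m) = (\<Sum>k=1..K. rr k) ^ m * P (\<lambda>_. 0)"
  by (induction m) (simp_all add: level_0 sum_level_Suc[OF assms])

lemma empty_state_probability:
  assumes bal: "balance_eqs K rr P" and mass: "(P has_sum 1) (states K)"
    and load: "\<bar>\<Sum>k=1..K. rr k\<bar> < 1"
  shows "P (\<lambda>_. 0) = 1 - (\<Sum>k=1..K. rr k)"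
proof -
  define S where "S = (\<Sum>k=1..K. rr k)"
  have "((\<lambda>m. sum P (level K m)) has_sum 1) UNIV"
    using mass unfolding states_eq_UN_level
    by (rule has_sum_disjoint_finite_UN) (simp_all add: disjoint_family_level finite_level)
  then have "(\<lambda>m. S ^ m * P (\<lambda>_. 0)) sums 1"
    unfolding sum_level[OF bal] S_def by (rule has_sum_imp_sums)
  moreover have "(\<lambda>m. S ^ m * P (\<lambda>_. 0)) sums (1 / (1 - S) * P (\<lambda>_. 0))"
    using load unfolding S_def by (intro sums_mult2 geometric_sums) simp
  ultimately have "1 / (1 - S) * P (\<lambda>_. 0) = 1"
    by (rule sums_unique2[symmetric])
  then show ?thesis
    using load by (simp add: S_def field_simps)
qed

lemma balance_first_axis:
  assumes K: "1 \<le> K" and bal: "balance_eqs K rr P"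
  shows "(1 + (\<Sum>k=1..K. rr k)) * P ((\<lambda>_. 0)(1 := Suc l))
       = rr 1 * P ((\<lambda>_. 0)(1 := l)) + P ((\<lambda>_. 0)(1 := Suc (Suc l)))"
proof -
  define n :: "nat \<Rightarrow> nat" where "n = (\<lambda>_. 0)(1 := Suc l)"
  have "n \<in> states K" using K by (simp add: n_def states_def)
  then have eq: "(1 + (\<Sum>k=1..K. rr k)) * P n = (\<Prod>j=1..K. kdelta0 (n j)) * P n
      + (\<Sum>\<kappa>=1..K. rr \<kappa> * p_minus P n \<kappa> + (\<Prod>j=1..<\<kappa>. kdelta0 (n j)) * p_plus P n \<kappa>)"
    using bal by (simp add: balance_eqs_def)
  have "(\<Prod>j=1..K. kdelta0 (n j)) = 0"
    using K by (force simp: prod_kdelta0 n_def)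
  moreover have "rr \<kappa> * p_minus P n \<kappa> + (\<Prod>j=1..<\<kappa>. kdelta0 (n j)) * p_plus P n \<kappa> =
      (if \<kappa> = 1 then rr 1 * P ((\<lambda>_. 0)(1 := l)) + P ((\<lambda>_. 0)(1 := Suc (Suc l))) else 0)"
    if "\<kappa> \<in> {1..K}" for \<kappa>
    using that by (force simp: n_def p_minus_def p_plus_def prod_kdelta0)
  ultimately show ?thesis
    using eq K by (simp add: n_def)
qed

lemma first_axis_geometric:
  assumes K: "1 \<le> K" and bal: "balance_eqs K rr P"
    and r1: "rr 1 < (\<Sum>k=1..K. rr k)"
    and bounded: "Bseq (\<lambda>l. P ((\<lambda>_. 0)(1 := l)))"
  shows "P ((\<lambda>_. 0)(1 := l)) =
    ((1 + (\<Sum>k=1..K. rr k) - sqrt ((1 + (\<Sum>k=1..K. rr k))^2 - 4 * rr 1)) / 2) ^ l * P (\<lambda>_. 0)"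
proof -
  define S where "S = (\<Sum>k=1..K. rr k)"
  define x where "x = (1 + S - sqrt ((1 + S)^2 - 4 * rr 1)) / 2"
  define y where "y = (1 + S + sqrt ((1 + S)^2 - 4 * rr 1)) / 2"
  have roots: "x + y = 1 + S" "x * y = rr 1" "1 < y"
    using quadratic_roots_sum_prod[of "rr 1" S] r1 by (simp_all add: x_def y_def S_def)
  have "P ((\<lambda>_. 0)(1 := l)) = x ^ l * P ((\<lambda>_. 0)(1 := 0))"
  proof (rule bounded_recurrence_stable_root[where a = "\<lambda>l. P ((\<lambda>_. 0)(1 := l))"])
    show "P ((\<lambda>_. 0)(1 := Suc (Suc l)))
        = (x + y) * P ((\<lambda>_. 0)(1 := Suc l)) - x * y * P ((\<lambda>_. 0)(1 := l))" for l
      using balance_first_axis[OF K bal, of l] roots by (simp add: S_def)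
  qed (use bounded roots(3) in simp_all)
  moreover have "(\<lambda>_::nat. 0::nat)(1 := 0) = (\<lambda>_. 0)"
    by (simp add: fun_upd_def)
  ultimately show ?thesis
    by (simp add: x_def S_def)
qed

theorem mainTheorem7:
  fixes K :: nat and rr :: "nat \<Rightarrow> real" and P :: "(nat \<Rightarrow> nat) \<Rightarrow> real"
  assumes K2: "K \<ge> 2"
    and pos: "\<And>k. k \<in> {1..K} \<Longrightarrow> rr k > 0"
    and load: "(\<Sum>k=1..K. rr k) < 1"
    and nonneg: "\<And>n. n \<in> states K \<Longrightarrow> P n \<ge> 0"
    and summ: "P summable_on states K"
    and norm: "infsum P (states K) = 1"
    and bal: "balance_eqs K rr P"
  shows "\<forall>l::nat. P ((\<lambda>_. 0)(1 := l)) =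
           (1 - (\<Sum>k=1..K. rr k)) *
           ((1 + (\<Sum>k=1..K. rr k)
               - sqrt ((1 + (\<Sum>k=1..K. rr k))^2 - 4 * rr 1)) / 2) ^ l"
proof -
  define S where "S = (\<Sum>k=1..K. rr k)"
  have "S = rr 1 + (\<Sum>k=Suc 1..K. rr k)"
    unfolding S_def by (rule sum.atLeast_Suc_atMost) (use K2 in simp)
  moreover have "0 < (\<Sum>k=Suc 1..K. rr k)"
    using K2 pos by (intro sum_pos) auto
  ultimately have r1: "rr 1 < S" by simp
  have mass: "(P has_sum 1) (states K)"
    using summ norm has_sum_infsum by metis
  have "0 \<le> S"
    unfolding S_def using pos by (intro sum_nonneg) (simp add: less_imp_le)
  then have P0: "P (\<lambda>_. 0) = 1 - S"
    using empty_state_probability[OF bal mass] load by (simp add: S_def)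
  have "Bseq (\<lambda>l. P ((\<lambda>_. 0)(1 := l)))"
  proof (rule BseqI')
    fix l
    have "(\<lambda>_. 0)(1 := l) \<in> states K"
      using K2 by (simp add: states_def)
    then show "norm (P ((\<lambda>_. 0)(1 := l))) \<le> 1"
      using finite_sum_le_has_sum[OF mass, of "{(\<lambda>_. 0)(1 := l)}"] nonneg by simp
  qed
  then show ?thesis
    using first_axis_geometric[OF _ bal r1[unfolded S_def]] K2 P0 by (simp add: S_def mult.commute)
qed

end
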